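(* Consider the finite game with players $\mathcal{M}=\{1,\dots,M\}$, common action set $\mathcal{N}$ and costs $c_i(\mathbf{a}) = \frac{\sigma^2}{h_{ia_i}}\,\frac{\beta_i}{[1-\sum_{l\in\mathcal{M}_{a_i}(\mathbf{a})}\beta_l]^+}$, and suppose $h_{ij}=h_j$ and $\beta_i=\beta$ for all $i\in\mathcal{M}$, $j\in\mathcal{N}$. Then the steady states of MAPC$^\ast$ are the Pareto efficient Nash equilibria of the game.
   Context: Uplink cellular model: mobiles $\mathcal{M}=\{1,\dots,M\}$, BSs $\mathcal{N}=\{1,\dots,N\}$, power gains $h_{ij}>0$, noise power $\sigma^2>0$, target SINRs $\gamma_i>0$, $\beta_i=\gamma_i/(1+\gamma_i)$. Association profile $\mathbf{a}\in\mathcal{N}^M$, $\mathcal{M}_j(\mathbf{a})=\{l: a_l=j\}$, $[x]^+=\max(x,0)$, positive$/0=+\infty$; $(b,\mathbf{a}_{-i})$ replaces $a_i$ by $b$. Algorithm MAPC$^\ast$: at times $t=0,1,2,\dots$, mobile $i=1+(t\bmod M)$ changes its association at $t+1$ iff $a_i(t)\notin\arg\min_{j\in\mathcal{N}}\big(c_i(j,\mathbf{a}(t)_{-i}),\ \sum_{l\in\mathcal{M}_j((j,\mathbf{a}(t)_{-i}))}\beta_l\big)$ (lexicographic minimization), in which case $a_i(t+1)$ is chosen from this argmin. A steady state of MAPC$^\ast$ is a profile from which no mobile ever changes its association. $\mathbf{a}$ is a Nash equilibrium if $a_i\in\arg\min_{b\in\mathcal{N}}c_i(b,\mathbf{a}_{-i})$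 for all $i$. $\mathbf{a}$ is Pareto dominated by $\mathbf{a}'$ if $c_i(\mathbf{a}')\le c_i(\mathbf{a})$ for all $i$ with strict inequality for some $i$; $\mathbf{a}$ is Pareto efficient if no profile Pareto dominates it. Standing assumption: there exists at least one feasible association, i.e. some $\mathbf{a}$ with $\sum_{l\in\mathcal{M}_j(\mathbf{a})}\beta_l<1$ for all $j$. *)

theory Defs
  imports Complex_Main "HOL-Library.Extended_Real"
begin

text \<open>Mobiles are indexed 0..M-1 (paper: 1..M), base stations 0..N-1 (paper: 1..N).
  An association profile is a function nat => nat, fixed to 0 outside the mobiles.\<close>

definition beta_of :: "(nat \<Rightarrow> real) \<Rightarrow> nat \<Rightarrow> real" where
  "beta_of \<gamma> i = \<gamma> i / (1 + \<gamma> i)"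

definition profiles :: "nat \<Rightarrow> nat \<Rightarrow> (nat \<Rightarrow> nat) set" where
  "profiles M N = {a. (\<forall>i<M. a i < N) \<and> (\<forall>i. M \<le> i \<longrightarrow> a i = 0)}"

definition load :: "(nat \<Rightarrow> real) \<Rightarrow> nat \<Rightarrow> (nat \<Rightarrow> nat) \<Rightarrow> nat \<Rightarrow> real" where
  "load \<beta> M a j = (\<Sum>l\<in>{l. l < M \<and> a l = j}. \<beta> l)"

definition cost :: "(nat \<Rightarrow> nat \<Rightarrow> real) \<Rightarrow> real \<Rightarrow> (nat \<Rightarrow> real) \<Rightarrow> nat
                     \<Rightarrow> (nat \<Rightarrow> nat) \<Rightarrow> nat \<Rightarrow> ereal" where
  "cost h \<sigma>2 \<beta> M a i =
     (let S = load \<beta> M a (a i) in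
      if 1 - S > 0 then ereal (\<sigma>2 / h i (a i) * \<beta> i / (1 - S)) else PInfty)"

definition lex_less :: "ereal \<times> real \<Rightarrow> ereal \<times> real \<Rightarrow> bool" where
  "lex_less p q = (fst p < fst q \<or> (fst p = fst q \<and> snd p < snd q))"

definition lex_argmin :: "(nat \<Rightarrow> nat \<Rightarrow> real) \<Rightarrow> real \<Rightarrow> (nat \<Rightarrow> real) \<Rightarrow> nat \<Rightarrow> nat
                          \<Rightarrow> (nat \<Rightarrow> nat) \<Rightarrow> nat \<Rightarrow> nat set" where
  "lex_argmin h \<sigma>2 \<beta> M N a i =
     (let f = (\<lambda>j. (cost h \<sigma>2 \<beta> M (a(i := j)) i, load \<beta> M (a(i := j)) j))
      in {j. j < N \<and> (\<forall>k<N. \<not> lex_less (f k) (f j))})"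

text \<open>One step of MAPC*: at time t, mobile (t mod M) (paper: 1 + (t mod M)) updates.\<close>
definition mapc_step :: "(nat \<Rightarrow> nat \<Rightarrow> real) \<Rightarrow> real \<Rightarrow> (nat \<Rightarrow> real) \<Rightarrow> nat \<Rightarrow> nat
                         \<Rightarrow> (nat \<Rightarrow> nat) \<Rightarrow> nat \<Rightarrow> (nat \<Rightarrow> nat) \<Rightarrow> bool" where
  "mapc_step h \<sigma>2 \<beta> M N a t a' =
     (let i = t mod M; A = lex_argmin h \<sigma>2 \<beta> M N a i in
      if a i \<in> A then a' = a else (\<exists>b\<in>A. a' = a(i := b)))"

definition mapc_run :: "(nat \<Rightarrow> nat \<Rightarrow> real) \<Rightarrow> real \<Rightarrow> (nat \<Rightarrow> real) \<Rightarrow> nat \<Rightarrow> nat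
                        \<Rightarrow> (nat \<Rightarrow> nat \<Rightarrow> nat) \<Rightarrow> (nat \<Rightarrow> nat) \<Rightarrow> bool" where
  "mapc_run h \<sigma>2 \<beta> M N x a =
     (x 0 = a \<and> (\<forall>t. mapc_step h \<sigma>2 \<beta> M N (x t) t (x (Suc t))))"

definition steady_state :: "(nat \<Rightarrow> nat \<Rightarrow> real) \<Rightarrow> real \<Rightarrow> (nat \<Rightarrow> real) \<Rightarrow> nat \<Rightarrow> nat
                            \<Rightarrow> (nat \<Rightarrow> nat) \<Rightarrow> bool" where
  "steady_state h \<sigma>2 \<beta> M N a =
     (a \<in> profiles M N \<and> (\<forall>x. mapc_run h \<sigma>2 \<beta> M N x a \<longrightarrow> (\<forall>t. x t = a)))"

definition nash_eq :: "(nat \<Rightarrow> nat \<Rightarrow> real) \<Rightarrow> real \<Rightarrow> (nat \<Rightarrow> real) \<Rightarrow> nat \<Rightarrow> nat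
                       \<Rightarrow> (nat \<Rightarrow> nat) \<Rightarrow> bool" where
  "nash_eq h \<sigma>2 \<beta> M N a =
     (a \<in> profiles M N \<and>
      (\<forall>i<M. \<forall>b<N. cost h \<sigma>2 \<beta> M a i \<le> cost h \<sigma>2 \<beta> M (a(i := b)) i))"

definition pareto_dominated :: "(nat \<Rightarrow> nat \<Rightarrow> real) \<Rightarrow> real \<Rightarrow> (nat \<Rightarrow> real) \<Rightarrow> nat
                                \<Rightarrow> (nat \<Rightarrow> nat) \<Rightarrow> (nat \<Rightarrow> nat) \<Rightarrow> bool" where
  "pareto_dominated h \<sigma>2 \<beta> M a a' =
     ((\<forall>i<M. cost h \<sigma>2 \<beta> M a' i \<le> cost h \<sigma>2 \<beta> M a i) \<and>
      (\<exists>i<M. cost h \<sigma>2 \<beta> M a' i < cost h \<sigma>2 \<beta> M a i))"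

definition pareto_efficient :: "(nat \<Rightarrow> nat \<Rightarrow> real) \<Rightarrow> real \<Rightarrow> (nat \<Rightarrow> real) \<Rightarrow> nat \<Rightarrow> nat
                                \<Rightarrow> (nat \<Rightarrow> nat) \<Rightarrow> bool" where
  "pareto_efficient h \<sigma>2 \<beta> M N a =
     (a \<in> profiles M N \<and> \<not> (\<exists>a'\<in>profiles M N. pareto_dominated h \<sigma>2 \<beta> M a a'))"

end

theory Submission
  imports Defs "HOL-Library.Product_Lexorder"
begin

text \<open>In the symmetric game the cost of a mobile depends only on its station j and the
  occupancy n of j, through A_j / (1 - b n). A steady state is a Nash equilibrium because
  MAPC* minimises the cost first. Conversely, at a Pareto efficient Nash equilibrium a mobile
  of station j that MAPC* would move to k faces equal costs and a strictly smaller occupancy at k;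
  exchanging all mobiles of k against n_k + 1 mobiles of j is then a Pareto improvement.
  Finally, let V be the largest cost in a steady state and m the largest occupancy of a station
  with cost V. A Pareto improvement can only add one mobile to a station of occupancy at least
  m - 1 whose entry cost is V. Counting, with weight m - 1 per moved mobile, the mobiles that
  pay less than V shows that every changed station switches between occupancies m and m - 1,
  which leaves the total cost unchanged and contradicts a strict improvement.\<close>

definition occupancy :: "nat \<Rightarrow> (nat \<Rightarrow> nat) \<Rightarrow> nat \<Rightarrow> nat" where
  "occupancy M a j = card {l. l < M \<and> a l = j}"

lemma occupancy_pos_iff: "0 < occupancy M a j \<longleftrightarrow> (\<exists>l<M. a l = j)"
  by (auto simp: occupancy_def card_gt_0_iff)

lemma occupancy_fun_upd_self:
  assumes "i < M"
  shows "occupancy M (a(i := k)) k = (if a i = k then occupancy M a k else Suc (occupancy M a k))"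
proof (cases "a i = k")
  case False
  have "{l. l < M \<and> (a(i := k)) l = k} = insert i {l. l < M \<and> a l = k}"
    using assms False by auto
  with False show ?thesis by (simp add: occupancy_def)
qed (simp add: fun_upd_idem)

lemma load_uniform:
  assumes "\<forall>i<M. \<beta> i = b"
  shows "load \<beta> M a j = b * real (occupancy M a j)"
proof -
  have "load \<beta> M a j = (\<Sum>l\<in>{l. l < M \<and> a l = j}. b)"
    unfolding load_def using assms by (intro sum.cong) auto
  then show ?thesis by (simp add: occupancy_def)
qed

lemma sum_mobiles_by_station:
  assumes "a \<in> profiles M N"
  shows "(\<Sum>l<M. F (a l)) = (\<Sum>j<N. of_nat (occupancy M a j) * (F j :: 'c::comm_semiring_1))"
proof -
  have "(\<Sum>l<M. F (a l)) = (\<Sum>l<M. \<Sum>j<N. if a l = j then F j else 0)"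
    using assms by (intro sum.cong) (auto simp: profiles_def sum.delta)
  also have "\<dots> = (\<Sum>j<N. \<Sum>l\<in>{l. l < M \<and> a l = j}. F j)"
    by (subst sum.swap) (simp add: sum.If_cases Int_def conj_commute)
  finally show ?thesis by (simp add: occupancy_def)
qed

lemma sum_occupancy:
  assumes "a \<in> profiles M N"
  shows "(\<Sum>j<N. occupancy M a j) = M"
  using sum_mobiles_by_station[OF assms, of "\<lambda>_. 1::nat"] by simp

lemma card_mobiles_by_station:
  assumes "a \<in> profiles M N"
  shows "card {l. l < M \<and> P (a l)} = (\<Sum>j<N. if P j then occupancy M a j else 0)"
proof -
  have "card {l. l < M \<and> P (a l)} = (\<Sum>l<M. if P (a l) then 1 else (0::nat))"
    by (simp add: sum.If_cases Int_def conj_commute)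
  also have "\<dots> = (\<Sum>j<N. if P j then occupancy M a j else 0)"
    by (subst sum_mobiles_by_station[OF assms]) (simp add: if_distrib cong: if_cong)
  finally show ?thesis .
qed

lemma lex_less_iff: "lex_less p q \<longleftrightarrow> p < q"
  by (cases p; cases q) (auto simp: lex_less_def)

lemma mem_lex_argmin_iff:
  "j \<in> lex_argmin h \<sigma>2 \<beta> M N a i \<longleftrightarrow> j < N \<and>
     (\<forall>k<N. (cost h \<sigma>2 \<beta> M (a(i := j)) i, load \<beta> M (a(i := j)) j)
           \<le> (cost h \<sigma>2 \<beta> M (a(i := k)) i, load \<beta> M (a(i := k)) k))"
  by (auto simp: lex_argmin_def lex_less_iff not_less)

lemma lex_argmin_nonempty:
  assumes "N > 0"
  shows "lex_argmin h \<sigma>2 \<beta> M N a i \<noteq> {}"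
proof -
  define f where "f j = (cost h \<sigma>2 \<beta> M (a(i := j)) i, load \<beta> M (a(i := j)) j)" for j
  have fin: "finite (f ` {..<N})" "f ` {..<N} \<noteq> {}" using assms by auto
  obtain j where "j < N" "f j = Min (f ` {..<N})"
    using Min_in[OF fin] by auto
  then have "j \<in> lex_argmin h \<sigma>2 \<beta> M N a i"
    using fin by (auto simp: mem_lex_argmin_iff f_def[symmetric])
  then show ?thesis by blast
qed

lemma mapc_step_exists:
  assumes "N > 0"
  shows "\<exists>a'. mapc_step h \<sigma>2 \<beta> M N a t a'"
proof -
  obtain j where "j \<in> lex_argmin h \<sigma>2 \<beta> M N a (t mod M)"
    using lex_argmin_nonempty[OF assms] by blast
  then show ?thesis by (auto simp: mapc_step_def Let_def)
qed

lemma steady_state_iff: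
  assumes "M > 0" and "N > 0"
  shows "steady_state h \<sigma>2 \<beta> M N a \<longleftrightarrow>
    a \<in> profiles M N \<and> (\<forall>i<M. a i \<in> lex_argmin h \<sigma>2 \<beta> M N a i)"
proof
  assume steady: "steady_state h \<sigma>2 \<beta> M N a"
  have "a i \<in> lex_argmin h \<sigma>2 \<beta> M N a i" if "i < M" for i
  proof (rule ccontr)
    assume moves: "a i \<notin> lex_argmin h \<sigma>2 \<beta> M N a i"
    define x where "x = rec_nat a (\<lambda>t y. SOME a'. mapc_step h \<sigma>2 \<beta> M N y t a')"
    have "mapc_step h \<sigma>2 \<beta> M N (x t) t (x (Suc t))" for t
      unfolding x_def by (simp, rule someI_ex[OF mapc_step_exists[OF assms(2)]])
    then have "mapc_run h \<sigma>2 \<beta> M N x a"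
      by (simp add: mapc_run_def x_def)
    then have "x i = a \<and> x (Suc i) = a"
      using steady by (simp add: steady_state_def)
    with \<open>mapc_step h \<sigma>2 \<beta> M N (x i) i (x (Suc i))\<close>
    have "mapc_step h \<sigma>2 \<beta> M N a i a" by simp
    \<comment> \<open>at time i < M it is mobile i that updates\<close>
    then show False
      using moves \<open>i < M\<close> by (auto simp: mapc_step_def Let_def) (metis fun_upd_same)
  qed
  with steady show "a \<in> profiles M N \<and> (\<forall>i<M. a i \<in> lex_argmin h \<sigma>2 \<beta> M N a i)"
    by (simp add: steady_state_def)
next
  assume stable: "a \<in> profiles M N \<and> (\<forall>i<M. a i \<in> lex_argmin h \<sigma>2 \<beta> M N a i)"
  have "x t = a" if run: "mapc_run h \<sigma>2 \<beta> M N x a" for x t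
  proof (induction t)
    case 0
    from run show ?case by (simp add: mapc_run_def)
  next
    case (Suc t)
    have "mapc_step h \<sigma>2 \<beta> M N (x t) t (x (Suc t))" using run by (simp add: mapc_run_def)
    with Suc stable \<open>M > 0\<close> show ?case by (simp add: mapc_step_def Let_def)
  qed
  with stable show "steady_state h \<sigma>2 \<beta> M N a"
    by (simp add: steady_state_def)
qed

lemma steady_state_imp_nash_eq:
  assumes "M > 0" and "N > 0" and "steady_state h \<sigma>2 \<beta> M N a"
  shows "nash_eq h \<sigma>2 \<beta> M N a"
proof -
  have "cost h \<sigma>2 \<beta> M a i \<le> cost h \<sigma>2 \<beta> M (a(i := k)) i" if "i < M" "k < N" for i k
    using assms that unfolding steady_state_iff[OF assms(1,2)] mem_lex_argmin_iff
    by (force simp: less_eq_prod_def)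
  with assms show ?thesis
    by (simp add: nash_eq_def steady_state_def)
qed

lemma swap_profile:
  assumes a: "a \<in> profiles M N" and "j < N" "k < N" "j \<noteq> k" and s: "s \<le> occupancy M a j"
  obtains a' where "a' \<in> profiles M N"
    and "\<And>l. l < M \<Longrightarrow> a l = k \<Longrightarrow> a' l = j"
    and "\<And>l. l < M \<Longrightarrow> a l = j \<Longrightarrow> a' l = j \<or> a' l = k"
    and "\<And>l. l < M \<Longrightarrow> a l \<noteq> j \<Longrightarrow> a l \<noteq> k \<Longrightarrow> a' l = a l"
    and "occupancy M a' k = s"
    and "occupancy M a' j = occupancy M a k + (occupancy M a j - s)"
    and "\<And>x. x \<noteq> j \<Longrightarrow> x \<noteq> k \<Longrightarrow> occupancy M a' x = occupancy M a x"
    and "s < occupancy M a j \<Longrightarrow> \<exists>l<M. a l = j \<and> a' l = j"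
proof -
  define R where "R x = {l. l < M \<and> a l = x}" for x
  have finR: "finite (R x)" for x by (simp add: R_def)
  obtain S where S: "S \<subseteq> R j" "card S = s"
    using obtain_subset_with_card_n[of s "R j"] s by (auto simp: R_def occupancy_def)
  define a' where "a' l = (if l < M \<and> a l = k then j else if l \<in> S then k else a l)" for l
  have SR: "l < M \<and> a l = j" if "l \<in> S" for l using S(1) that by (auto simp: R_def)
  show ?thesis
  proof (rule that)
    show "a' \<in> profiles M N"
      using a assms(2,3) SR unfolding profiles_def a'_def by (auto, force)
    have "{l. l < M \<and> a' l = k} = S"
      using SR \<open>j \<noteq> k\<close> by (auto simp: a'_def)
    then show "occupancy M a' k = s"
      using S by (simp add: occupancy_def)
    have "{l. l < M \<and> a' l = j} = R k \<union> (R j - S)"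
      using SR \<open>j \<noteq> k\<close> by (auto simp: a'_def R_def)
    moreover have "card (R k \<union> (R j - S)) = card (R k) + (card (R j) - s)"
      using S finR \<open>j \<noteq> k\<close>
      by (simp add: card_Un_disjoint card_Diff_subset finite_subset Int_Diff disjoint_iff R_def)
    ultimately show "occupancy M a' j = occupancy M a k + (occupancy M a j - s)"
      by (simp add: occupancy_def R_def)
    fix x assume "x \<noteq> j" "x \<noteq> k"
    then have "{l. l < M \<and> a' l = x} = R x"
      using SR by (auto simp: a'_def R_def)
    then show "occupancy M a' x = occupancy M a x"
      by (simp add: occupancy_def R_def)
  next
    assume "s < occupancy M a j"
    then have "\<not> R j \<subseteq> S"
      using S card_mono[OF finite_subset[OF S(1) finR]] by (auto simp: occupancy_def R_def)
    then obtain l where "l \<in> R j" "l \<notin> S" by blast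
    then show "\<exists>l<M. a l = j \<and> a' l = j"
      using \<open>j \<noteq> k\<close> by (auto simp: a'_def R_def)
  qed (auto simp: a'_def dest: SR)
qed

lemma divide_add_le_divide_add:
  fixes p q u v c :: real
  assumes "0 < p" "0 < v" "v \<le> u" "0 \<le> c" "q / u = p / v"
  shows "p / (v + c) \<le> q / (u + c)"
proof -
  have cross: "p * u = q * v" using assms by (simp add: field_simps)
  have "p * v \<le> p * u"
    using assms by (simp add: mult_left_mono)
  with cross assms have "p \<le> q"
    by (simp add: mult_le_cancel_right_pos)
  then have "p * c \<le> q * c"
    using assms by (simp add: mult_right_mono)
  with cross show ?thesis
    using assms by (simp add: divide_simps algebra_simps)
qed

locale symmetric_network =
  fixes h :: "nat \<Rightarrow> nat \<Rightarrow> real" and \<sigma>2 :: real and \<gamma> :: "nat \<Rightarrow> real"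
    and M N :: nat and hb :: "nat \<Rightarrow> real" and b :: real
  assumes M_pos: "M > 0" and N_pos: "N > 0"
    and h_pos: "\<forall>i<M. \<forall>j<N. h i j > 0"
    and \<sigma>2_pos: "\<sigma>2 > 0"
    and \<gamma>_pos: "\<forall>i<M. \<gamma> i > 0"
    and feasible: "\<exists>a\<in>profiles M N. \<forall>j<N. load (beta_of \<gamma>) M a j < 1"
    and sym_h: "\<forall>i<M. \<forall>j<N. h i j = hb j"
    and sym_beta: "\<forall>i<M. beta_of \<gamma> i = b"
begin

abbreviation \<beta> :: "nat \<Rightarrow> real" where "\<beta> \<equiv> beta_of \<gamma>"
abbreviation occ :: "(nat \<Rightarrow> nat) \<Rightarrow> nat \<Rightarrow> nat" where "occ \<equiv> occupancy M"

definition station_cost :: "nat \<Rightarrow> nat \<Rightarrow> real" where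
  "station_cost j n = \<sigma>2 / hb j * b / (1 - b * real n)"

definition station_ecost :: "nat \<Rightarrow> nat \<Rightarrow> ereal" where
  "station_ecost j n = (if b * real n < 1 then ereal (station_cost j n) else PInfty)"

lemma b_pos: "0 < b"
proof -
  have "b = \<gamma> 0 / (1 + \<gamma> 0)" "\<gamma> 0 > 0"
    using sym_beta \<gamma>_pos M_pos by (auto simp: beta_of_def)
  then show ?thesis by simp
qed

lemma hb_pos: "j < N \<Longrightarrow> 0 < hb j"
  using h_pos sym_h M_pos by force

lemma station_cost_strict_mono:
  assumes "j < N" "b * real n < 1" "m < n"
  shows "station_cost j m < station_cost j n"
proof -
  have "0 < \<sigma>2 / hb j * b" using hb_pos \<sigma>2_pos b_pos assms(1) by simp
  moreover have "b * real m < b * real n" using assms(3) b_pos by simp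
  ultimately show ?thesis
    using assms(2) unfolding station_cost_def by (intro divide_strict_left_mono) auto
qed

lemma station_cost_mono: "j < N \<Longrightarrow> b * real n < 1 \<Longrightarrow> m \<le> n \<Longrightarrow> station_cost j m \<le> station_cost j n"
  using station_cost_strict_mono[of j n m] by (cases "m = n") auto

lemma capacity_mono:
  assumes "b * real n < 1" "m \<le> n"
  shows "b * real m < 1"
proof -
  have "b * real m \<le> b * real n" using assms(2) b_pos by (intro mult_left_mono) auto
  with assms(1) show ?thesis by linarith
qed

lemma station_ecost_finite: "b * real n < 1 \<Longrightarrow> station_ecost j n = ereal (station_cost j n)"
  by (simp add: station_ecost_def)

lemma station_ecost_mono: "j < N \<Longrightarrow> m \<le> n \<Longrightarrow> station_ecost j m \<le> station_ecost j n"
  using capacity_mono[of n m] station_cost_mono[of j n m] by (auto simp: station_ecost_def)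

lemma station_cost_pred:
  assumes "b * real n \<noteq> 1"
  shows "station_cost j (n - 1) = station_cost j n * (1 - b * real n) / (1 - b * real (n - 1))"
  using assms by (simp add: station_cost_def)

lemma cost_eq_station_ecost:
  "i < M \<Longrightarrow> a i < N \<Longrightarrow> cost h \<sigma>2 \<beta> M a i = station_ecost (a i) (occ a (a i))"
  unfolding cost_def Let_def load_uniform[OF sym_beta] station_ecost_def station_cost_def
  using sym_h sym_beta by auto

lemma deviation_eq:
  fixes a :: "nat \<Rightarrow> nat"
  assumes "i < M" "k < N"
  defines "n \<equiv> if a i = k then occ a k else Suc (occ a k)"
  shows "(cost h \<sigma>2 \<beta> M (a(i := k)) i, load \<beta> M (a(i := k)) k) = (station_ecost k n, b * real n)"
  using assms cost_eq_station_ecost[of i "a(i := k)"] occupancy_fun_upd_self[of i M a k]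
  by (simp add: load_uniform[OF sym_beta])

lemma mem_lex_argmin_iff_stations:
  assumes "a \<in> profiles M N" "i < M"
  shows "a i \<in> lex_argmin h \<sigma>2 \<beta> M N a i \<longleftrightarrow>
    (\<forall>k<N. k \<noteq> a i \<longrightarrow>
       (station_ecost (a i) (occ a (a i)), occ a (a i)) \<le> (station_ecost k (Suc (occ a k)), Suc (occ a k)))"
proof -
  have ai: "a i < N" using assms by (simp add: profiles_def)
  have scale: "(x, b * real m) \<le> (y, b * real n) \<longleftrightarrow> (x, m) \<le> (y, n)" for x y :: ereal and m n
    using b_pos by simp
  have "(cost h \<sigma>2 \<beta> M (a(i := a i)) i, load \<beta> M (a(i := a i)) (a i))
      \<le> (cost h \<sigma>2 \<beta> M (a(i := k)) i, load \<beta> M (a(i := k)) k) \<longleftrightarrow>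
    (k \<noteq> a i \<longrightarrow>
       (station_ecost (a i) (occ a (a i)), occ a (a i)) \<le> (station_ecost k (Suc (occ a k)), Suc (occ a k)))"
    if "k < N" for k
    using deviation_eq[OF assms(2) ai, of a] deviation_eq[OF assms(2) that, of a]
    by (cases "k = a i") (simp_all add: scale del: less_eq_prod_simp of_nat_Suc)
  then show ?thesis
    using ai unfolding mem_lex_argmin_iff by blast
qed

lemma nash_eq_capacity:
  assumes ne: "nash_eq h \<sigma>2 \<beta> M N a" and i: "i < M"
  shows "b * real (occ a (a i)) < 1"
proof (rule ccontr)
  \<comment> \<open>Otherwise no station could admit one more mobile, so every station would hold at least
    as many mobiles as in a feasible profile, and station a i strictly more.\<close>
  assume over: "\<not> ?thesis"
  have a: "a \<in> profiles M N" using ne by (simp add: nash_eq_def)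
  have ai: "a i < N" using a i by (simp add: profiles_def)
  have full: "\<not> b * real (Suc (occ a k)) < 1" if "k < N" "k \<noteq> a i" for k
  proof -
    have "cost h \<sigma>2 \<beta> M a i \<le> cost h \<sigma>2 \<beta> M (a(i := k)) i"
      using ne i that by (simp add: nash_eq_def)
    then have "station_ecost (a i) (occ a (a i)) \<le> station_ecost k (Suc (occ a k))"
      using cost_eq_station_ecost[of i a, OF i ai] deviation_eq[OF i that(1), of a] that(2) by simp
    with over show ?thesis by (auto simp: station_ecost_def)
  qed
  obtain a0 where a0: "a0 \<in> profiles M N" "\<forall>j<N. load \<beta> M a0 j < 1"
    using feasible by blast
  have fewer: "occ a0 k < (if k = a i then occ a k else Suc (occ a k))" if "k < N" for k
  proof -
    have "b * real (occ a0 k) < 1"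
      using a0(2) that by (simp add: load_uniform[OF sym_beta])
    moreover have "1 \<le> b * real (if k = a i then occ a k else Suc (occ a k))"
      using over full[OF that] by auto
    ultimately have "b * real (occ a0 k) < b * real (if k = a i then occ a k else Suc (occ a k))"
      by linarith
    then show ?thesis using b_pos by (simp only: mult_less_cancel_left_pos of_nat_less_iff)
  qed
  have "(\<Sum>k<N. occ a0 k) < (\<Sum>k<N. occ a k)"
  proof (rule sum_strict_mono_ex1)
    show "\<forall>k\<in>{..<N}. occ a0 k \<le> occ a k"
      using fewer by (metis lessThan_iff less_Suc_eq_le less_imp_le)
    show "\<exists>k\<in>{..<N}. occ a0 k < occ a k"
      using fewer[OF ai] ai by auto
  qed simp
  then show False using sum_occupancy[OF a] sum_occupancy[OF a0(1)] by simp
qed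

lemma station_cost_shift:
  assumes "j < N" "k < N" "x \<le> y" "b * real (Suc y) < 1"
    and "station_cost k (Suc x) = station_cost j (Suc y)"
  shows "station_cost j y \<le> station_cost k x"
proof -
  have "\<sigma>2 / hb j * b / ((1 - b * real (Suc y)) + b) \<le> \<sigma>2 / hb k * b / ((1 - b * real (Suc x)) + b)"
  proof (rule divide_add_le_divide_add)
    show "0 < \<sigma>2 / hb j * b" using hb_pos \<sigma>2_pos b_pos assms(1) by simp
    show "0 < 1 - b * real (Suc y)" using assms(4) by simp
    show "1 - b * real (Suc y) \<le> 1 - b * real (Suc x)" using assms(3) b_pos by simp
    show "0 \<le> b" using b_pos by simp
    show "\<sigma>2 / hb k * b / (1 - b * real (Suc x)) = \<sigma>2 / hb j * b / (1 - b * real (Suc y))"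
      using assms(5) by (simp add: station_cost_def)
  qed
  then show ?thesis by (simp add: station_cost_def algebra_simps)
qed

lemma pareto_dominated_by_swap:
  assumes a: "a \<in> profiles M N" and j: "j < N" and k: "k < N" and "j \<noteq> k"
    and crowded: "Suc (occ a k) < occ a j" and cap: "b * real (occ a j) < 1"
    and tie: "station_cost k (Suc (occ a k)) = station_cost j (occ a j)"
  shows "\<exists>a'\<in>profiles M N. pareto_dominated h \<sigma>2 \<beta> M a a'"
proof -
  obtain y where y: "occ a j = Suc y" using crowded by (cases "occ a j") auto
  obtain a' where a': "a' \<in> profiles M N"
    and k_to_j: "\<And>l. l < M \<Longrightarrow> a l = k \<Longrightarrow> a' l = j"
    and from_j: "\<And>l. l < M \<Longrightarrow> a l = j \<Longrightarrow> a' l = j \<or> a' l = k"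
    and others: "\<And>l. l < M \<Longrightarrow> a l \<noteq> j \<Longrightarrow> a l \<noteq> k \<Longrightarrow> a' l = a l"
    and occ_k: "occ a' k = Suc (occ a k)"
    and occ_j: "occ a' j = occ a k + (occ a j - Suc (occ a k))"
    and occ_other: "\<And>x. x \<noteq> j \<Longrightarrow> x \<noteq> k \<Longrightarrow> occ a' x = occ a x"
    and stay: "\<exists>l<M. a l = j \<and> a' l = j"
    using swap_profile[OF a j k \<open>j \<noteq> k\<close> less_imp_le[OF crowded]] crowded by auto
  have occ_j': "occ a' j = y" using occ_j y crowded by simp
  have cap_y: "b * real y < 1" and cap_k: "b * real (Suc (occ a k)) < 1"
    using capacity_mono[OF cap, of y] capacity_mono[OF cap, of "Suc (occ a k)"] y crowded by auto
  have shift: "station_cost j y \<le> station_cost k (occ a k)"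
    using station_cost_shift[OF j k _ _ tie[unfolded y]] crowded y cap by simp
  have drop: "station_cost j y < station_cost j (occ a j)"
    using station_cost_strict_mono[OF j cap] y by simp
  have cost_a: "cost h \<sigma>2 \<beta> M a l = station_ecost (a l) (occ a (a l))"
    and cost_a': "cost h \<sigma>2 \<beta> M a' l = station_ecost (a' l) (occ a' (a' l))" if "l < M" for l
    using cost_eq_station_ecost[of l a] cost_eq_station_ecost[of l a'] a a' that
    by (auto simp: profiles_def)
  have le: "cost h \<sigma>2 \<beta> M a' l \<le> cost h \<sigma>2 \<beta> M a l" if l: "l < M" for l
  proof -
    consider "a l = k" | "a l = j" "a' l = k" | "a l = j" "a' l = j" | "a l \<noteq> j" "a l \<noteq> k"
      using from_j[OF l] by blast
    then show ?thesis
    proof cases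
      case 1
      then show ?thesis
        using k_to_j[OF l] cost_a[OF l] cost_a'[OF l] occ_j' shift cap_y capacity_mono[OF cap_k]
        by (simp add: station_ecost_finite)
    next
      case 2
      then show ?thesis
        using cost_a[OF l] cost_a'[OF l] occ_k tie cap cap_k by (simp add: station_ecost_finite)
    next
      case 3
      then show ?thesis
        using cost_a[OF l] cost_a'[OF l] occ_j' drop cap cap_y by (simp add: station_ecost_finite)
    next
      case 4
      then show ?thesis
        using cost_a[OF l] cost_a'[OF l] others[OF l] occ_other by simp
    qed
  qed
  from stay obtain l0 where l0: "l0 < M" "a l0 = j" "a' l0 = j" by blast
  have "cost h \<sigma>2 \<beta> M a' l0 < cost h \<sigma>2 \<beta> M a l0"
    using cost_a[OF l0(1)] cost_a'[OF l0(1)] l0 occ_j' drop cap cap_y by (simp add: station_ecost_finite)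
  with le l0(1) a' show ?thesis
    unfolding pareto_dominated_def by blast
qed

lemma nash_pareto_imp_steady:
  assumes ne: "nash_eq h \<sigma>2 \<beta> M N a" and pe: "pareto_efficient h \<sigma>2 \<beta> M N a"
  shows "steady_state h \<sigma>2 \<beta> M N a"
proof -
  have a: "a \<in> profiles M N" using ne by (simp add: nash_eq_def)
  have "a i \<in> lex_argmin h \<sigma>2 \<beta> M N a i" if i: "i < M" for i
    unfolding mem_lex_argmin_iff_stations[OF a i]
  proof (intro allI impI)
    fix k assume k: "k < N" "k \<noteq> a i"
    have ai: "a i < N" using a i by (simp add: profiles_def)
    have "cost h \<sigma>2 \<beta> M a i \<le> cost h \<sigma>2 \<beta> M (a(i := k)) i"
      using ne i k by (simp add: nash_eq_def)
    then have no_gain: "station_ecost (a i) (occ a (a i)) \<le> station_ecost k (Suc (occ a k))"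
      using cost_eq_station_ecost[of i a, OF i ai] deviation_eq[OF i k(1), of a] k(2) by simp
    show "(station_ecost (a i) (occ a (a i)), occ a (a i)) \<le> (station_ecost k (Suc (occ a k)), Suc (occ a k))"
    proof (rule ccontr)
      assume "\<not> ?thesis"
      with no_gain have tie: "station_ecost k (Suc (occ a k)) = station_ecost (a i) (occ a (a i))"
        and crowded: "Suc (occ a k) < occ a (a i)"
        by auto
      have cap: "b * real (occ a (a i)) < 1" using nash_eq_capacity[OF ne i] .
      moreover have "b * real (Suc (occ a k)) < 1" using capacity_mono[OF cap, of "Suc (occ a k)"] crowded by simp
      ultimately have "station_cost k (Suc (occ a k)) = station_cost (a i) (occ a (a i))"
        using tie by (simp add: station_ecost_finite)
      with pareto_dominated_by_swap[OF a ai k(1) k(2)[symmetric] crowded cap] pe show False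
        by (auto simp: pareto_efficient_def)
    qed
  qed
  with a show ?thesis by (simp add: steady_state_iff[OF M_pos N_pos])
qed

definition station_total :: "nat \<Rightarrow> nat \<Rightarrow> real" where
  "station_total j n = real n * station_cost j n"

definition real_cost :: "(nat \<Rightarrow> nat) \<Rightarrow> nat \<Rightarrow> real" where
  "real_cost x l = station_cost (x l) (occ x (x l))"

lemma sum_real_cost:
  "x \<in> profiles M N \<Longrightarrow> (\<Sum>l<M. real_cost x l) = (\<Sum>j<N. station_total j (occ x j))"
  using sum_mobiles_by_station[of x M N "\<lambda>j. station_cost j (occ x j)"]
  by (simp add: real_cost_def station_total_def)

end

locale dominated_steady_state = symmetric_network +
  fixes a a' :: "nat \<Rightarrow> nat"
  assumes steady: "steady_state h \<sigma>2 (beta_of \<gamma>) M N a"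
    and a'_profile: "a' \<in> profiles M N"
    and dominated: "pareto_dominated h \<sigma>2 (beta_of \<gamma>) M a a'"
begin

lemma a_profile: "a \<in> profiles M N"
  using steady by (simp add: steady_state_def)

lemma a_station: "l < M \<Longrightarrow> a l < N" and a'_station: "l < M \<Longrightarrow> a' l < N"
  using a_profile a'_profile by (auto simp: profiles_def)

lemma a_capacity: "l < M \<Longrightarrow> b * real (occ a (a l)) < 1"
  using nash_eq_capacity steady_state_imp_nash_eq[OF M_pos N_pos steady] by blast

lemma cost_a: "l < M \<Longrightarrow> cost h \<sigma>2 \<beta> M a l = ereal (real_cost a l)"
  using cost_eq_station_ecost[of l a] a_station a_capacity
  by (simp add: station_ecost_finite real_cost_def)

lemma a'_capacity:
  assumes "l < M"
  shows "b * real (occ a' (a' l)) < 1"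
proof (rule ccontr)
  assume "\<not> ?thesis"
  then have "cost h \<sigma>2 \<beta> M a' l = PInfty"
    using cost_eq_station_ecost[of l a'] a'_station assms by (simp add: station_ecost_def)
  moreover have "cost h \<sigma>2 \<beta> M a' l \<le> cost h \<sigma>2 \<beta> M a l"
    using dominated assms by (simp add: pareto_dominated_def)
  ultimately show False using cost_a[OF assms] by simp
qed

lemma cost_a': "l < M \<Longrightarrow> cost h \<sigma>2 \<beta> M a' l = ereal (real_cost a' l)"
  using cost_eq_station_ecost[of l a'] a'_station a'_capacity
  by (simp add: station_ecost_finite real_cost_def)

lemma real_cost_le: "l < M \<Longrightarrow> real_cost a' l \<le> real_cost a l"
  using dominated cost_a cost_a' by (simp add: pareto_dominated_def)

lemma real_cost_less: "\<exists>l<M. real_cost a' l < real_cost a l"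
  using dominated cost_a cost_a' by (auto simp: pareto_dominated_def)

lemma steady_no_better_station:
  assumes "l < M" "k < N" "k \<noteq> a l"
  shows "(station_ecost (a l) (occ a (a l)), occ a (a l)) \<le> (station_ecost k (Suc (occ a k)), Suc (occ a k))"
  using steady assms mem_lex_argmin_iff_stations[OF a_profile assms(1)]
  by (simp add: steady_state_iff[OF M_pos N_pos])

definition top_cost :: real where
  "top_cost = Max (real_cost a ` {..<M})"

lemma real_cost_le_top: "l < M \<Longrightarrow> real_cost a l \<le> top_cost"
  by (simp add: top_cost_def)

lemma top_cost_attained: obtains l where "l < M" "real_cost a l = top_cost"
  using Max_in[of "real_cost a ` {..<M}"] M_pos unfolding top_cost_def by fastforce

lemma occupied_station:
  assumes "0 < occ a j"
  shows "b * real (occ a j) < 1" and "station_cost j (occ a j) \<le> top_cost"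
proof -
  obtain l where "l < M" "a l = j" using assms occupancy_pos_iff by blast
  then show "b * real (occ a j) < 1" "station_cost j (occ a j) \<le> top_cost"
    using a_capacity real_cost_le_top by (auto simp: real_cost_def)
qed

lemma entry_cost_ge_top:
  assumes k: "k < N"
  shows "ereal top_cost \<le> station_ecost k (Suc (occ a k))"
proof -
  obtain l where l: "l < M" "real_cost a l = top_cost" by (rule top_cost_attained)
  have "ereal top_cost = station_ecost (a l) (occ a (a l))"
    using l a_capacity by (simp add: station_ecost_finite real_cost_def)
  also have "\<dots> \<le> station_ecost k (Suc (occ a k))"
  proof (cases "k = a l")
    case True
    then show ?thesis using station_ecost_mono[OF k] by simp
  next
    case False
    then show ?thesis using steady_no_better_station[OF l(1) k] by (auto simp: less_eq_prod_def)
  qed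
  finally show ?thesis .
qed

definition top_stations :: "nat set" where
  "top_stations = {j. j < N \<and> 0 < occ a j \<and> station_cost j (occ a j) = top_cost}"

definition top_occ :: nat where
  "top_occ = Max (occ a ` top_stations)"

lemma top_stations_nonempty: "top_stations \<noteq> {}"
proof -
  obtain l where l: "l < M" "real_cost a l = top_cost" by (rule top_cost_attained)
  then have "a l \<in> top_stations"
    using a_station occupancy_pos_iff by (auto simp: top_stations_def real_cost_def)
  then show ?thesis by blast
qed

lemma occ_le_top_occ: "j \<in> top_stations \<Longrightarrow> occ a j \<le> top_occ"
  by (simp add: top_occ_def top_stations_def)

lemma top_occ_attained: obtains t where "t \<in> top_stations" "occ a t = top_occ"
  using Max_in[of "occ a ` top_stations"] top_stations_nonempty
  unfolding top_occ_def by (fastforce simp: top_stations_def)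

lemma top_occ_pos: "0 < top_occ" and top_occ_capacity: "b * real top_occ < 1"
proof -
  obtain t where "t \<in> top_stations" "occ a t = top_occ" by (rule top_occ_attained)
  then show "0 < top_occ" "b * real top_occ < 1"
    using occupied_station(1)[of t] by (auto simp: top_stations_def)
qed

lemma gaining_station:
  assumes k: "k < N" and gain: "occ a k < occ a' k"
  shows "occ a' k = Suc (occ a k)" and "station_cost k (Suc (occ a k)) = top_cost"
    and "station_cost k (occ a k) < top_cost" and "top_occ \<le> Suc (occ a k)"
proof -
  obtain l where l: "l < M" "a' l = k" using gain occupancy_pos_iff by (metis gr0I not_less0)
  have cap': "b * real (occ a' k) < 1" using a'_capacity l by auto
  have cap: "b * real (Suc (occ a k)) < 1" using capacity_mono[OF cap', of "Suc (occ a k)"] gain by simp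
  have below: "station_cost k (occ a' k) \<le> top_cost"
    using real_cost_le[OF l(1)] real_cost_le_top[OF l(1)] l by (simp add: real_cost_def)
  have above: "top_cost \<le> station_cost k (Suc (occ a k))"
    using entry_cost_ge_top[OF k] cap by (simp add: station_ecost_finite)
  show occ': "occ a' k = Suc (occ a k)"
  proof (rule ccontr)
    assume "occ a' k \<noteq> Suc (occ a k)"
    with gain have "Suc (occ a k) < occ a' k" by simp
    with station_cost_strict_mono[OF k cap'] below above show False by fastforce
  qed
  show top: "station_cost k (Suc (occ a k)) = top_cost"
    using below above occ' by simp
  show cheaper: "station_cost k (occ a k) < top_cost"
    using station_cost_strict_mono[OF k cap, of "occ a k"] top by simp
  obtain t where t: "t \<in> top_stations" "occ a t = top_occ" by (rule top_occ_attained)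
  then obtain l' where l': "l' < M" "a l' = t"
    using occupancy_pos_iff by (auto simp: top_stations_def)
  have "station_ecost t (occ a t) = ereal top_cost"
    using t occupied_station(1)[of t] by (simp add: top_stations_def station_ecost_finite)
  moreover have "station_ecost k (Suc (occ a k)) = ereal top_cost"
    using cap top by (simp add: station_ecost_finite)
  ultimately have "station_ecost t (occ a t) = station_ecost k (Suc (occ a k))" by simp
  moreover have "k \<noteq> t" using t(1) cheaper by (auto simp: top_stations_def)
  ultimately show "top_occ \<le> Suc (occ a k)"
    using steady_no_better_station[OF l'(1) k] l' t by auto
qed

definition below_top :: "(nat \<Rightarrow> nat) \<Rightarrow> nat \<Rightarrow> nat" where
  "below_top x j = (if station_cost j (occ x j) < top_cost then occ x j else 0)"

lemma sum_below_top_mono: "(\<Sum>j<N. below_top a j) \<le> (\<Sum>j<N. below_top a' j)"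
proof -
  have "{l. l < M \<and> real_cost a l < top_cost} \<subseteq> {l. l < M \<and> real_cost a' l < top_cost}"
    using real_cost_le by force
  then have "card {l. l < M \<and> real_cost a l < top_cost} \<le> card {l. l < M \<and> real_cost a' l < top_cost}"
    by (intro card_mono) auto
  then show ?thesis
    using card_mobiles_by_station[OF a_profile, of "\<lambda>j. station_cost j (occ a j) < top_cost"]
      card_mobiles_by_station[OF a'_profile, of "\<lambda>j. station_cost j (occ a' j) < top_cost"]
    by (simp add: below_top_def real_cost_def)
qed

text \<open>The slack is nonnegative at every station, whereas its sum is at most 0: the total
  occupancy is M in both profiles, and no mobile paying less than top_cost under a pays
  top_cost or more under a'.\<close>

definition slack :: "nat \<Rightarrow> int" where
  "slack j = (1 - int top_occ) * (int (occ a' j) - int (occ a j)) - (int (below_top a' j) - int (below_top a j))"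

definition swing_gain :: real where
  "swing_gain = real top_occ * top_cost
     - real (top_occ - 1) * (top_cost * (1 - b * real top_occ) / (1 - b * real (top_occ - 1)))"

lemma station_total_swing:
  assumes "station_cost j top_occ = top_cost"
  shows "station_total j top_occ - station_total j (top_occ - 1) = swing_gain"
  using assms station_cost_pred[of top_occ j] top_occ_capacity
  by (simp add: station_total_def swing_gain_def)

definition linear_change :: "nat \<Rightarrow> bool" where
  "linear_change j \<longleftrightarrow> station_total j (occ a' j) - station_total j (occ a j)
     = swing_gain * (real (occ a' j) - real (occ a j))"

lemma gaining_station_slack:
  assumes j: "j < N" and gain: "occ a j < occ a' j"
  shows "0 \<le> slack j \<and> (slack j = 0 \<longrightarrow> linear_change j)"
proof -
  note g = gaining_station[OF j gain]
  have "below_top a j = occ a j" using g(3) by (simp add: below_top_def)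
  moreover have "below_top a' j = 0" using g(1,2) by (simp add: below_top_def)
  ultimately have sl: "slack j = 1 - int top_occ + int (occ a j)"
    using g(1) by (simp add: slack_def)
  then have "0 \<le> slack j" using g(4) by simp
  moreover have "linear_change j" if "slack j = 0"
  proof -
    from that sl top_occ_pos have "occ a j = top_occ - 1" by simp
    then show ?thesis
      using station_total_swing g(1,2) top_occ_pos by (simp add: linear_change_def)
  qed
  ultimately show ?thesis by blast
qed

lemma top_station_slack:
  assumes j: "j \<in> top_stations" and keep: "occ a' j \<le> occ a j"
  shows "0 \<le> slack j \<and> (slack j = 0 \<longrightarrow> linear_change j)"
proof (cases "occ a' j = occ a j")
  case True
  then have "below_top a' j = below_top a j" by (simp add: below_top_def)
  with True show ?thesis by (simp add: slack_def linear_change_def)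
next
  case False
  have jN: "j < N" and occupied: "0 < occ a j" and top: "station_cost j (occ a j) = top_cost"
    using j by (auto simp: top_stations_def)
  have cap: "b * real (occ a j) < 1" using occupied_station(1)[OF occupied] .
  have le_top: "occ a j \<le> top_occ" using occ_le_top_occ[OF j] .
  from False keep have lost: "1 \<le> int (occ a j) - int (occ a' j)" by simp
  have "station_cost j (occ a' j) < top_cost"
    using station_cost_strict_mono[OF jN cap] False keep top by simp
  then have sl: "slack j = int top_occ * (int (occ a j) - int (occ a' j)) - int (occ a j)"
    using top by (simp add: slack_def below_top_def algebra_simps)
  have "int top_occ * 1 \<le> int top_occ * (int (occ a j) - int (occ a' j))"
    using lost by (intro mult_left_mono) auto
  then have "0 \<le> slack j" using sl le_top by simp
  moreover have "linear_change j" if "slack j = 0"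
  proof -
    have "int top_occ * (int (occ a j) - int (occ a' j)) \<le> int top_occ * 1"
      using sl that le_top by simp
    then have "int (occ a j) - int (occ a' j) \<le> 1"
      using top_occ_pos by (simp add: mult_le_cancel_left_pos)
    with lost sl that have "occ a j = top_occ" "occ a' j = top_occ - 1" by auto
    then show ?thesis
      using station_total_swing[of j] top top_occ_pos by (simp add: linear_change_def algebra_simps)
  qed
  ultimately show ?thesis by blast
qed

lemma other_station_slack:
  assumes j: "j < N" "j \<notin> top_stations" and keep: "occ a' j \<le> occ a j"
  shows "0 \<le> slack j \<and> (slack j = 0 \<longrightarrow> linear_change j)"
proof -
  have below: "station_cost j (occ a j) < top_cost" if "0 < occ a j"
    using occupied_station(2)[OF that] j that by (auto simp: top_stations_def)
  have below_top_a: "below_top a j = occ a j"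
  proof (cases "occ a j = 0")
    case False
    with below show ?thesis by (simp add: below_top_def)
  qed (simp add: below_top_def)
  have "station_cost j (occ a' j) < top_cost" if "0 < occ a' j"
  proof -
    have occupied: "0 < occ a j" using that keep by simp
    have "station_cost j (occ a' j) \<le> station_cost j (occ a j)"
      using station_cost_mono[OF j(1) occupied_station(1)[OF occupied] keep] .
    with below[OF occupied] show ?thesis by simp
  qed
  then have below_top_a': "below_top a' j = occ a' j"
    by (cases "occ a' j = 0") (auto simp: below_top_def)
  have sl: "slack j = int top_occ * (int (occ a j) - int (occ a' j))"
    using below_top_a below_top_a' by (simp add: slack_def algebra_simps)
  then have "0 \<le> slack j" using keep by simp
  moreover have "occ a' j = occ a j" if "slack j = 0"
    using that sl top_occ_pos by simp
  ultimately show ?thesis by (auto simp: linear_change_def)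
qed

lemma station_slack:
  assumes "j < N"
  shows "0 \<le> slack j \<and> (slack j = 0 \<longrightarrow> linear_change j)"
  using gaining_station_slack[OF assms] top_station_slack other_station_slack[OF assms]
  by (cases "occ a j < occ a' j"; cases "j \<in> top_stations") (auto simp: not_less)

lemma steady_state_not_dominated: False
proof -
  have "(\<Sum>j<N. slack j) = (1 - int top_occ) * (int (\<Sum>j<N. occ a' j) - int (\<Sum>j<N. occ a j))
      - (int (\<Sum>j<N. below_top a' j) - int (\<Sum>j<N. below_top a j))"
    by (simp add: slack_def sum_subtractf flip: sum_distrib_left)
  also have "\<dots> \<le> 0"
    using sum_occupancy[OF a_profile] sum_occupancy[OF a'_profile] sum_below_top_mono
    by (simp del: of_nat_sum)
  finally have "\<forall>j\<in>{..<N}. slack j = 0"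
    using station_slack by (subst sum_nonneg_eq_0_iff[symmetric]) (auto intro: antisym sum_nonneg)
  then have linear: "linear_change j" if "j < N" for j
    using station_slack that by blast
  have "(\<Sum>j<N. station_total j (occ a' j)) - (\<Sum>j<N. station_total j (occ a j))
      = swing_gain * (real (\<Sum>j<N. occ a' j) - real (\<Sum>j<N. occ a j))"
    using linear by (simp add: linear_change_def sum_subtractf[symmetric] sum_distrib_left)
  also have "\<dots> = 0"
    using sum_occupancy[OF a_profile] sum_occupancy[OF a'_profile] by simp
  finally have "(\<Sum>l<M. real_cost a' l) = (\<Sum>l<M. real_cost a l)"
    using sum_real_cost[OF a_profile] sum_real_cost[OF a'_profile] by simp
  moreover have "(\<Sum>l<M. real_cost a' l) < (\<Sum>l<M. real_cost a l)"
    using real_cost_le real_cost_less by (intro sum_strict_mono_ex1) auto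
  ultimately show False by simp
qed

end

context symmetric_network begin

lemma steady_imp_pareto_efficient:
  assumes steady: "steady_state h \<sigma>2 \<beta> M N a"
  shows "pareto_efficient h \<sigma>2 \<beta> M N a"
proof -
  have "False" if a': "a' \<in> profiles M N" and dom: "pareto_dominated h \<sigma>2 \<beta> M a a'" for a'
  proof -
    interpret dominated_steady_state h \<sigma>2 \<gamma> M N hb b a a'
      by (intro dominated_steady_state.intro dominated_steady_state_axioms.intro
          symmetric_network_axioms steady a' dom)
    show False by (rule steady_state_not_dominated)
  qed
  with steady show ?thesis
    by (auto simp: pareto_efficient_def steady_state_def)
qed

end

theorem proposition4:
  fixes h :: "nat \<Rightarrow> nat \<Rightarrow> real" and \<sigma>2 :: real and \<gamma> :: "nat \<Rightarrow> real"
    and M N :: nat and hb :: "nat \<Rightarrow> real" and b :: real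
  assumes "M > 0" and "N > 0"
    and "\<forall>i<M. \<forall>j<N. h i j > 0"
    and "\<sigma>2 > 0"
    and "\<forall>i<M. \<gamma> i > 0"
    and feasible: "\<exists>a\<in>profiles M N. \<forall>j<N. load (beta_of \<gamma>) M a j < 1"
    and sym_h: "\<forall>i<M. \<forall>j<N. h i j = hb j"
    and sym_beta: "\<forall>i<M. beta_of \<gamma> i = b"
  shows "{a. steady_state h \<sigma>2 (beta_of \<gamma>) M N a}
       = {a. nash_eq h \<sigma>2 (beta_of \<gamma>) M N a \<and> pareto_efficient h \<sigma>2 (beta_of \<gamma>) M N a}"
proof -
  interpret symmetric_network h \<sigma>2 \<gamma> M N hb b
    using assms by unfold_locales
  show ?thesis
    using steady_state_imp_nash_eq[OF M_pos N_pos] steady_imp_pareto_efficient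
      nash_pareto_imp_steady by blast
qed

end
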